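(* A countably infinite metric space is isometric to a dense subset of the Urysohn space $\mathbb U$ if and only if it satisfies the almost extension property.
   Context: $\mathbb U$ denotes Urysohn's universal separable metric space: the unique (up to isometry) complete separable metric space such that for every finite metric space $F=\{x_0,\dots,x_n\}$, every isometry $\{x_0,\dots,x_{n-1}\}\to\mathbb U$ extends to an isometry $F\to\mathbb U$. For $\lambda>1$, an injection $f$ is $\lambda$-bi-Lipschitz if for all distinct $a,b$ in its domain $d(f(a),f(b))<\lambda d(a,b)$ and $d(a,b)<\lambda d(f(a),f(b))$. A metric space $X$ has the almost extension property if for every finite metric space $F=\{x_0,\dots,x_{n-1},x_n\}$ and every $\lambda>1$, every $\lambda$-bi-Lipschitz map $f:\{x_0,\dots,x_{n-1}\}\to X$ extends to a $\lambda$-bi-Lipschitz map $\hat f:F\to X$. *)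

theory Defs
  imports "HOL-Analysis.Analysis"
begin

text \<open>Finite metric spaces are represented on the point set {0..n} of naturals
  (every finite metric space is isometric to one of these); the last point n plays
  the role of x_n and {0..<n} the role of {x_0,...,x_(n-1)}.\<close>

definition isometric_into ::
  "'b set \<Rightarrow> ('b \<Rightarrow> 'b \<Rightarrow> real) \<Rightarrow> ('b \<Rightarrow> 'a) \<Rightarrow> 'a set \<Rightarrow> ('a \<Rightarrow> 'a \<Rightarrow> real) \<Rightarrow> bool" where
  "isometric_into A e f X d \<longleftrightarrow>
     (\<forall>a\<in>A. f a \<in> X) \<and> (\<forall>a\<in>A. \<forall>b\<in>A. d (f a) (f b) = e a b)"

definition bi_lipschitz ::
  "real \<Rightarrow> 'b set \<Rightarrow> ('b \<Rightarrow> 'b \<Rightarrow> real) \<Rightarrow> ('b \<Rightarrow> 'a) \<Rightarrow> 'a set \<Rightarrow> ('a \<Rightarrow> 'a \<Rightarrow> real) \<Rightarrow> bool" where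
  "bi_lipschitz lam A e f X d \<longleftrightarrow>
     (\<forall>a\<in>A. f a \<in> X) \<and> inj_on f A \<and>
     (\<forall>a\<in>A. \<forall>b\<in>A. a \<noteq> b \<longrightarrow> d (f a) (f b) < lam * e a b \<and> e a b < lam * d (f a) (f b))"

definition extension_property :: "'a set \<Rightarrow> ('a \<Rightarrow> 'a \<Rightarrow> real) \<Rightarrow> bool" where
  "extension_property U d \<longleftrightarrow>
     (\<forall>(n::nat) (e::nat \<Rightarrow> nat \<Rightarrow> real) f.
        Metric_space {0..n} e \<and> isometric_into {0..<n} e f U d \<longrightarrow>
        (\<exists>g. isometric_into {0..n} e g U d \<and> (\<forall>i<n. g i = f i)))"

definition urysohn_space :: "'a set \<Rightarrow> ('a \<Rightarrow> 'a \<Rightarrow> real) \<Rightarrow> bool" where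
  "urysohn_space U d \<longleftrightarrow>
     Metric_space U d \<and> Metric_space.mcomplete U d \<and>
     separable_space (Metric_space.mtopology U d) \<and> extension_property U d"

definition almost_extension_property :: "'a set \<Rightarrow> ('a \<Rightarrow> 'a \<Rightarrow> real) \<Rightarrow> bool" where
  "almost_extension_property X d \<longleftrightarrow>
     (\<forall>(n::nat) (e::nat \<Rightarrow> nat \<Rightarrow> real) (lam::real) f.
        Metric_space {0..n} e \<and> lam > 1 \<and> bi_lipschitz lam {0..<n} e f X d \<longrightarrow>
        (\<exists>g. bi_lipschitz lam {0..n} e g X d \<and> (\<forall>i<n. g i = f i)))"

end

theory Submission
  imports Defs
begin

(* The Urysohn space U itself has the almost extension property: on the finitely
   many given pairs a lambda-bi-Lipschitz map is even l-Lipschitz for some l < lambda, so the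
   Katetov function w |-> min_k (l * e(x_n, x_k) + d(f x_k, w)) is realized by a point q of U
   which satisfies the required strict inequalities.  Strict inequalities are an open condition,
   so q may be replaced by a point of any dense subset: dense isometric images inherit the
   property.
   Conversely, enumerate X and a countable dense set D of U and build a chain of finite partial
   isometries from X into U.  Each step adds the next point of X (extension property of U) and a
   point landing within 1/k of a prescribed point u of D: the almost extension property with
   lambda close to 1 yields y in X whose distances to the points already placed nearly agree
   with those of u, and the Katetov function taking the maximal discrepancy delta at u places y
   within delta of u.  The union of the chain is an isometric embedding with dense image. *)

definition katetov :: "'a set \<Rightarrow> ('a \<Rightarrow> 'a \<Rightarrow> real) \<Rightarrow> ('a \<Rightarrow> real) \<Rightarrow> bool" where
  "katetov M d r \<longleftrightarrow> (\<forall>x\<in>M. \<forall>y\<in>M. r x \<le> r y + d x y \<and> d x y \<le> r x + r y)"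

lemma katetov_nonneg:
  assumes "Metric_space M d" "katetov M d r" "x \<in> M"
  shows "0 \<le> r x"
proof -
  have "d x x \<le> r x + r x" using assms(2,3) unfolding katetov_def by blast
  then show ?thesis using Metric_space.mdist_zero[OF assms(1,3)] by simp
qed

lemma katetov_mdist:
  assumes "Metric_space X d" "A \<subseteq> X" "x \<in> X"
  shows "katetov A d (d x)"
proof -
  interpret Metric_space X d by fact
  show ?thesis
    unfolding katetov_def
  proof (intro ballI conjI)
    fix a b assume "a \<in> A" "b \<in> A"
    then have ab: "a \<in> X" "b \<in> X" using assms(2) by auto
    show "d x a \<le> d x b + d a b" using triangle[OF assms(3) ab(2,1)] commute[of a b] by simp
    show "d a b \<le> d x a + d x b" using triangle[OF ab(1) assms(3) ab(2)] commute[of a x] by simp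
  qed
qed

lemma katetov_diff_le_add:
  assumes "katetov M d f" "katetov M d g" "a \<in> M" "b \<in> M"
  shows "\<bar>f b - g b\<bar> \<le> f a + g a"
proof -
  have "f b \<le> f a + d b a" "d b a \<le> g b + g a" "g b \<le> g a + d b a" "d b a \<le> f b + f a"
    using assms unfolding katetov_def by blast+
  then show ?thesis by linarith
qed

lemma katetov_insert:
  assumes "Metric_space U d" "M \<subseteq> U" "u \<in> U" "katetov M d r" "0 \<le> s"
    and "\<And>w. w \<in> M \<Longrightarrow> \<bar>r w - d u w\<bar> \<le> s \<and> s \<le> r w + d u w"
  shows "katetov (insert u M) d (r(u := s))"
  unfolding katetov_def
proof (intro ballI)
  interpret Metric_space U d by fact
  fix x y assume x: "x \<in> insert u M" and y: "y \<in> insert u M"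
  show "(r(u := s)) x \<le> (r(u := s)) y + d x y \<and> d x y \<le> (r(u := s)) x + (r(u := s)) y"
  proof (cases "x = u"; cases "y = u")
    assume "x = u" "y = u"
    then show ?thesis using assms(3,5) by simp
  next
    assume "x = u" "y \<noteq> u"
    then show ?thesis using y assms(6)[of y] by (simp add: abs_le_iff)
  next
    assume "x \<noteq> u" "y = u"
    then show ?thesis using x assms(6)[of x] commute[of x u] by (simp add: abs_le_iff)
  next
    assume "x \<noteq> u" "y \<noteq> u"
    then show ?thesis using x y assms(4) by (simp add: katetov_def)
  qed
qed

lemma katetov_image:
  assumes "katetov A d r" "isometric_into A d h U dU" "inj_on h A"
  shows "katetov (h ` A) dU (\<lambda>w. r (inv_into A h w))"
  using assms by (auto simp: katetov_def isometric_into_def)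

lemma katetov_Min:
  assumes "Metric_space U d" "finite K" "K \<noteq> {}" "p ` K \<subseteq> U" "M \<subseteq> U"
    and "\<And>k k'. k \<in> K \<Longrightarrow> k' \<in> K \<Longrightarrow> d (p k) (p k') \<le> c k + c k'"
  shows "katetov M d (\<lambda>w. Min ((\<lambda>k. c k + d (p k) w) ` K))"
proof -
  interpret Metric_space U d by fact
  let ?r = "\<lambda>w. Min ((\<lambda>k. c k + d (p k) w) ` K)"
  have le: "?r w \<le> c k + d (p k) w" if "k \<in> K" for k w
    using assms(2) that by (intro Min_le) auto
  have attained: "\<exists>k\<in>K. ?r w = c k + d (p k) w" for w
  proof -
    have "?r w \<in> (\<lambda>k. c k + d (p k) w) ` K" using assms(2,3) by (intro Min_in) auto
    then show ?thesis by auto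
  qed
  show ?thesis
    unfolding katetov_def
  proof (intro ballI conjI)
    fix x y assume "x \<in> M" "y \<in> M"
    then have xy: "x \<in> U" "y \<in> U" using assms(5) by auto
    obtain k where k: "k \<in> K" "?r y = c k + d (p k) y" using attained by blast
    have pk: "p k \<in> U" using k(1) assms(4) by auto
    have "d (p k) x \<le> d (p k) y + d y x" using triangle[OF pk xy(2,1)] .
    then show "?r x \<le> ?r y + d x y" using le[OF k(1), of x] k(2) commute[of x y] by linarith
    obtain k' where k': "k' \<in> K" "?r x = c k' + d (p k') x" using attained by blast
    have pk': "p k' \<in> U" using k'(1) assms(4) by auto
    have "d x y \<le> d x (p k') + d (p k') y" using triangle[OF xy(1) pk' xy(2)] .
    moreover have "d (p k') y \<le> d (p k') (p k) + d (p k) y" using triangle[OF pk' pk xy(2)] .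
    ultimately show "d x y \<le> ?r x + ?r y"
      using k k' assms(6)[of k' k] commute[of x "p k'"] by linarith
  qed
qed

(* The absolute values only matter off the carrier, where Metric_space still demands nonnegativity. *)
definition one_point_metric ::
    "('a \<Rightarrow> 'a \<Rightarrow> real) \<Rightarrow> ('a \<Rightarrow> real) \<Rightarrow> 'a option \<Rightarrow> 'a option \<Rightarrow> real" where
  "one_point_metric d r a b = (case a of
      None \<Rightarrow> (case b of None \<Rightarrow> 0 | Some y \<Rightarrow> \<bar>r y\<bar>)
    | Some x \<Rightarrow> (case b of None \<Rightarrow> \<bar>r x\<bar> | Some y \<Rightarrow> d x y))"

lemma Metric_space_one_point_metric:
  assumes M: "Metric_space M d" and r: "katetov M d r" and pos: "\<And>x. x \<in> M \<Longrightarrow> 0 < r x"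
  shows "Metric_space (insert None (Some ` M)) (one_point_metric d r)"
proof
  interpret Metric_space M d by fact
  have r_le: "r x \<le> r y + d x y" and d_le: "d x y \<le> r x + r y" if "x \<in> M" "y \<in> M" for x y
    using r that by (auto simp: katetov_def)
  fix x y z
  show "0 \<le> one_point_metric d r x y" by (auto simp: one_point_metric_def split: option.splits)
  show "one_point_metric d r x y = one_point_metric d r y x"
    by (auto simp: one_point_metric_def commute split: option.splits)
  assume x: "x \<in> insert None (Some ` M)" and y: "y \<in> insert None (Some ` M)"
  then show "one_point_metric d r x y = 0 \<longleftrightarrow> x = y"
    using pos by (fastforce simp: one_point_metric_def split: option.splits)
  assume z: "z \<in> insert None (Some ` M)"
  show "one_point_metric d r x z \<le> one_point_metric d r x y + one_point_metric d r y z"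
    using x y z pos r_le d_le triangle commute
    by (auto simp: one_point_metric_def split: option.splits) (smt (verit) pos)+
qed

lemma finite_insert_enumeration:
  assumes "finite B" "p \<notin> B"
  obtains n :: nat and \<sigma> where "bij_betw \<sigma> {0..n} (insert p B)" "bij_betw \<sigma> {0..<n} B" "\<sigma> n = p"
proof -
  obtain \<sigma> where \<sigma>: "bij_betw \<sigma> {0..<card B} B" using ex_bij_betw_nat_finite[OF assms(1)] by blast
  let ?\<tau> = "\<sigma>(card B := p)"
  have \<tau>: "bij_betw ?\<tau> {0..<card B} B" using \<sigma> by (rule bij_betw_cong[THEN iffD1, rotated]) auto
  have "bij_betw ?\<tau> ({0..<card B} \<union> {card B}) (B \<union> {?\<tau> (card B)})"
    using \<tau> assms(2) by (intro notIn_Un_bij_betw) auto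
  moreover have "{0..<card B} \<union> {card B} = {0..card B}" by auto
  ultimately have "bij_betw ?\<tau> {0..card B} (insert p B)" by simp
  with \<tau> show ?thesis using that by simp
qed

lemma Metric_space_reindex:
  assumes "Metric_space A e" "bij_betw \<sigma> I A"
  shows "Metric_space I (\<lambda>i j. e (\<sigma> i) (\<sigma> j))"
proof
  interpret Metric_space A e by fact
  fix i j k
  show "0 \<le> e (\<sigma> i) (\<sigma> j)" by simp
  show "e (\<sigma> i) (\<sigma> j) = e (\<sigma> j) (\<sigma> i)" by (rule commute)
  assume ij: "i \<in> I" "j \<in> I"
  then have "\<sigma> i \<in> A" "\<sigma> j \<in> A" using assms(2) by (auto simp: bij_betw_def)
  then show "e (\<sigma> i) (\<sigma> j) = 0 \<longleftrightarrow> i = j"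
    using ij assms(2) by (auto simp: bij_betw_def inj_on_def)
  assume "k \<in> I"
  then have "\<sigma> k \<in> A" using assms(2) by (auto simp: bij_betw_def)
  then show "e (\<sigma> i) (\<sigma> k) \<le> e (\<sigma> i) (\<sigma> j) + e (\<sigma> j) (\<sigma> k)"
    using triangle \<open>\<sigma> i \<in> A\<close> \<open>\<sigma> j \<in> A\<close> by blast
qed

lemma isometric_into_reindex:
  assumes "bij_betw \<sigma> I A"
  shows "isometric_into I (\<lambda>i j. e (\<sigma> i) (\<sigma> j)) (\<lambda>i. f (\<sigma> i)) X d \<longleftrightarrow>
    isometric_into A e f X d"
  using assms by (auto simp: isometric_into_def bij_betw_def)

lemma bi_lipschitz_reindex:
  assumes "bij_betw \<sigma> I A"
  shows "bi_lipschitz lam I (\<lambda>i j. e (\<sigma> i) (\<sigma> j)) (\<lambda>i. f (\<sigma> i)) X d \<longleftrightarrow>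
    bi_lipschitz lam A e f X d"
proof -
  have A: "A = \<sigma> ` I" and inj: "inj_on \<sigma> I" using assms by (auto simp: bij_betw_def)
  have "inj_on (\<lambda>i. f (\<sigma> i)) I \<longleftrightarrow> inj_on f A"
    using comp_inj_on_iff[OF inj, of f] by (simp add: A o_def)
  moreover have "\<sigma> i \<noteq> \<sigma> j \<longleftrightarrow> i \<noteq> j" if "i \<in> I" "j \<in> I" for i j
    using inj that by (auto simp: inj_on_def)
  ultimately show ?thesis
    unfolding bi_lipschitz_def A by auto
qed

lemma extension_property_finite:
  assumes ext: "extension_property U dU" and "finite B" "p \<notin> B"
    and e: "Metric_space (insert p B) e" and f: "isometric_into B e f U dU"
  obtains g where "isometric_into (insert p B) e g U dU" "\<And>b. b \<in> B \<Longrightarrow> g b = f b"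
proof -
  obtain n :: nat and \<sigma>
    where \<sigma>: "bij_betw \<sigma> {0..n} (insert p B)" "bij_betw \<sigma> {0..<n} B" "\<sigma> n = p"
    using finite_insert_enumeration[OF assms(2,3)] by blast
  let ?e = "\<lambda>i j. e (\<sigma> i) (\<sigma> j)"
  have "Metric_space {0..n} ?e" by (rule Metric_space_reindex[OF e \<sigma>(1)])
  moreover have "isometric_into {0..<n} ?e (\<lambda>i. f (\<sigma> i)) U dU"
    using isometric_into_reindex[OF \<sigma>(2)] f by (rule iffD2)
  ultimately obtain G where G: "isometric_into {0..n} ?e G U dU" "\<And>i. i < n \<Longrightarrow> G i = f (\<sigma> i)"
    using ext[unfolded extension_property_def, rule_format, of n ?e "\<lambda>i. f (\<sigma> i)"] by blast
  let ?g = "\<lambda>b. G (inv_into {0..n} \<sigma> b)"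
  have "isometric_into {0..n} ?e (\<lambda>i. ?g (\<sigma> i)) U dU"
    using G(1) by (simp add: isometric_into_def bij_betw_inv_into_left[OF \<sigma>(1)])
  then have "isometric_into (insert p B) e ?g U dU"
    by (rule isometric_into_reindex[OF \<sigma>(1), THEN iffD1])
  moreover have "?g b = f b" if b: "b \<in> B" for b
  proof -
    obtain i where "i < n" "b = \<sigma> i" using \<sigma>(2) b by (auto simp: bij_betw_def)
    then show ?thesis using G(2) by (simp add: bij_betw_inv_into_left[OF \<sigma>(1)])
  qed
  ultimately show ?thesis by (rule that)
qed

lemma almost_extension_property_finite:
  assumes aep: "almost_extension_property X d" and "finite B" "p \<notin> B" "1 < lam"
    and e: "Metric_space (insert p B) e" and f: "bi_lipschitz lam B e f X d"
  obtains g where "bi_lipschitz lam (insert p B) e g X d" "\<And>b. b \<in> B \<Longrightarrow> g b = f b"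
proof -
  obtain n :: nat and \<sigma>
    where \<sigma>: "bij_betw \<sigma> {0..n} (insert p B)" "bij_betw \<sigma> {0..<n} B" "\<sigma> n = p"
    using finite_insert_enumeration[OF assms(2,3)] by blast
  let ?e = "\<lambda>i j. e (\<sigma> i) (\<sigma> j)"
  have "Metric_space {0..n} ?e" by (rule Metric_space_reindex[OF e \<sigma>(1)])
  moreover have "bi_lipschitz lam {0..<n} ?e (\<lambda>i. f (\<sigma> i)) X d"
    using bi_lipschitz_reindex[OF \<sigma>(2)] f by (rule iffD2)
  ultimately obtain G where G: "bi_lipschitz lam {0..n} ?e G X d" "\<And>i. i < n \<Longrightarrow> G i = f (\<sigma> i)"
    using aep[unfolded almost_extension_property_def, rule_format, of n ?e lam "\<lambda>i. f (\<sigma> i)"] \<open>1 < lam\<close>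
    by blast
  let ?g = "\<lambda>b. G (inv_into {0..n} \<sigma> b)"
  have "bi_lipschitz lam {0..n} ?e (\<lambda>i. ?g (\<sigma> i)) X d"
    using G(1) inj_on_cong[of "{0..n}" "\<lambda>i. ?g (\<sigma> i)" G] unfolding bi_lipschitz_def
    by (simp add: bij_betw_inv_into_left[OF \<sigma>(1)])
  then have "bi_lipschitz lam (insert p B) e ?g X d"
    by (rule bi_lipschitz_reindex[OF \<sigma>(1), THEN iffD1])
  moreover have "?g b = f b" if b: "b \<in> B" for b
  proof -
    obtain i where "i < n" "b = \<sigma> i" using \<sigma>(2) b by (auto simp: bij_betw_def)
    then show ?thesis using G(2) by (simp add: bij_betw_inv_into_left[OF \<sigma>(1)])
  qed
  ultimately show ?thesis by (rule that)
qed

lemma extension_property_realizes_katetov: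
  assumes MU: "Metric_space U dU" and ext: "extension_property U dU"
    and M: "finite M" "M \<subseteq> U" and r: "katetov M dU r"
  obtains q where "q \<in> U" "\<And>w. w \<in> M \<Longrightarrow> dU q w = r w"
proof (cases "\<exists>w\<in>M. r w = 0")
  case True
  \<comment> \<open>a zero of r is already the required point; otherwise r > 0 and the one-point metric applies\<close>
  then obtain w where w: "w \<in> M" "r w = 0" by blast
  have "dU w x = r x" if "x \<in> M" for x
  proof -
    have "r x \<le> r w + dU x w" "dU w x \<le> r w + r x" using r w(1) that unfolding katetov_def by blast+
    then show ?thesis using w(2) Metric_space.commute[OF MU, of x w] by linarith
  qed
  moreover have "w \<in> U" using w(1) M(2) by blast
  ultimately show ?thesis using that by simp
next
  case False
  have MM: "Metric_space M dU" using MU M(2) by (rule Metric_space.subspace)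
  have pos: "0 < r x" if "x \<in> M" for x
    using katetov_nonneg[OF MM r that] False that by force
  let ?M' = "insert None (Some ` M)" and ?e = "one_point_metric dU r"
  have e: "Metric_space ?M' ?e" using MM r pos by (rule Metric_space_one_point_metric)
  have the: "isometric_into (Some ` M) ?e the U dU"
    using M(2) by (auto simp: isometric_into_def one_point_metric_def)
  obtain g where g: "isometric_into ?M' ?e g U dU" "\<And>b. b \<in> Some ` M \<Longrightarrow> g b = the b"
    by (rule extension_property_finite[OF ext _ _ e the]) (use M(1) in auto)
  show ?thesis
  proof (rule that)
    show "g None \<in> U" using g(1) by (simp add: isometric_into_def)
    fix w assume w: "w \<in> M"
    then have "dU (g None) (g (Some w)) = ?e None (Some w)" using g(1) unfolding isometric_into_def by blast
    then show "dU (g None) w = r w" using g(2) pos[OF w] w by (simp add: one_point_metric_def)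
  qed
qed

lemma isometric_into_inj_on:
  assumes "Metric_space A e" "Metric_space X d" "isometric_into A e f X d"
  shows "inj_on f A"
proof (rule inj_onI)
  fix a b assume ab: "a \<in> A" "b \<in> A" "f a = f b"
  have "f a \<in> X" using assms(3) ab(1) by (simp add: isometric_into_def)
  then have "e a b = 0"
    using assms(3) ab Metric_space.zero[OF assms(2)] unfolding isometric_into_def by metis
  then show "a = b" using Metric_space.zero[OF assms(1) ab(1,2)] by simp
qed

lemma isometric_into_imp_bi_lipschitz:
  assumes "Metric_space A e" "Metric_space X d" "isometric_into A e f X d" "1 < lam"
  shows "bi_lipschitz lam A e f X d"
proof -
  have "0 < e a b" if "a \<in> A" "b \<in> A" "a \<noteq> b" for a b
    using Metric_space.mdist_pos_less[OF assms(1)] that by blast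
  then show ?thesis
    using isometric_into_inj_on[OF assms(1-3)] assms(3,4)
    unfolding bi_lipschitz_def isometric_into_def by auto
qed

lemma isometric_into_insert:
  assumes MX: "Metric_space X d" and MU: "Metric_space U dU"
    and h: "isometric_into A d h U dU" "A \<subseteq> X" and "y \<in> X" "q \<in> U"
    and q: "\<And>a. a \<in> A \<Longrightarrow> dU q (h a) = d y a"
  shows "isometric_into (insert y A) d (h(y := q)) U dU"
proof -
  interpret X: Metric_space X d by fact
  interpret U: Metric_space U dU by fact
  have q': "dU (h a) q = d a y" if "a \<in> A" for a
    using q[OF that] U.commute[of q] X.commute[of y] by simp
  have "dU ((h(y := q)) a) ((h(y := q)) b) = d a b" if "a \<in> insert y A" "b \<in> insert y A" for a b
    using that assms(5,6) q q' h(1) by (cases "a = y"; cases "b = y") (auto simp: isometric_into_def)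
  moreover have "(h(y := q)) a \<in> U" if "a \<in> insert y A" for a
    using that h(1) assms(6) by (auto simp: isometric_into_def)
  ultimately show ?thesis unfolding isometric_into_def by blast
qed

lemma bi_lipschitz_insert:
  assumes e: "Metric_space (insert p A) e" and MX: "Metric_space X d"
    and f: "bi_lipschitz lam A e f X d" and "p \<notin> A" "x \<in> X"
    and x: "\<And>a. a \<in> A \<Longrightarrow> d x (f a) < lam * e p a \<and> e p a < lam * d x (f a)"
  shows "bi_lipschitz lam (insert p A) e (f(p := x)) X d"
proof -
  interpret E: Metric_space "insert p A" e by fact
  interpret X: Metric_space X d by fact
  have "x \<noteq> f a" if "a \<in> A" for a
  proof
    assume "x = f a"
    moreover have "0 < e p a" using that \<open>p \<notin> A\<close> by (intro E.mdist_pos_less) auto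
    moreover have "f a \<in> X" using f that by (simp add: bi_lipschitz_def)
    ultimately show False using x[OF that] by simp
  qed
  then have "inj_on (f(p := x)) (insert p A)"
    using f \<open>p \<notin> A\<close> by (auto simp: bi_lipschitz_def inj_on_def)
  moreover have "(f(p := x)) a \<in> X" if "a \<in> insert p A" for a
    using that f \<open>x \<in> X\<close> by (auto simp: bi_lipschitz_def)
  moreover have x': "d (f a) x < lam * e a p \<and> e a p < lam * d (f a) x" if "a \<in> A" for a
    using x[OF that] X.commute[of x] E.commute[of p] by simp
  moreover have "d ((f(p := x)) a) ((f(p := x)) b) < lam * e a b \<and> e a b < lam * d ((f(p := x)) a) ((f(p := x)) b)"
    if "a \<in> insert p A" "b \<in> insert p A" "a \<noteq> b" for a b
    using that f x[of a] x[of b] x'[of a] x'[of b] \<open>p \<notin> A\<close>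
    by (cases "a = p"; cases "b = p") (auto simp: bi_lipschitz_def)
  ultimately show ?thesis unfolding bi_lipschitz_def by blast
qed

lemma finite_uniform_gap:
  fixes a b :: "'i \<Rightarrow> real"
  assumes "finite F" "\<And>k. k \<in> F \<Longrightarrow> a k < b k"
  shows "\<exists>\<eta>>0. \<forall>k\<in>F. a k + \<eta> < b k"
proof -
  let ?m = "Min (insert 1 ((\<lambda>k. b k - a k) ` F))"
  have "0 < ?m" using assms by (subst Min_gr_iff) auto
  moreover have "?m \<le> b k - a k" if "k \<in> F" for k using assms(1) that by (intro Min_le) auto
  ultimately show ?thesis by (intro exI[of _ "?m / 2"]) fastforce
qed

lemma bi_lipschitz_finite_slack:
  assumes "finite A" and e: "Metric_space A e" and MU: "Metric_space U dU"
    and F: "bi_lipschitz lam A e F U dU" and "1 < lam"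
  obtains l where "1 \<le> l" "l < lam" "\<And>a b. a \<in> A \<Longrightarrow> b \<in> A \<Longrightarrow> dU (F a) (F b) \<le> l * e a b"
proof -
  let ?P = "{(a, b) \<in> A \<times> A. a \<noteq> b}"
  have "finite ?P" by (rule finite_subset[of _ "A \<times> A"]) (use assms(1) in auto)
  moreover have "dU (F (fst ab)) (F (snd ab)) / e (fst ab) (snd ab) < lam" if "ab \<in> ?P" for ab
    using that F Metric_space.mdist_pos_less[OF e] by (auto simp: bi_lipschitz_def pos_divide_less_eq)
  ultimately obtain \<eta> where \<eta>: "0 < \<eta>"
    "\<And>ab. ab \<in> ?P \<Longrightarrow> dU (F (fst ab)) (F (snd ab)) / e (fst ab) (snd ab) + \<eta> < lam"
    using finite_uniform_gap[of ?P "\<lambda>ab. dU (F (fst ab)) (F (snd ab)) / e (fst ab) (snd ab)" "\<lambda>_. lam"]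
    by blast
  show ?thesis
  proof (rule that[of "max 1 (lam - \<eta>)"])
    show "max 1 (lam - \<eta>) < lam" using \<eta>(1) \<open>1 < lam\<close> by simp
    fix a b assume ab: "a \<in> A" "b \<in> A"
    show "dU (F a) (F b) \<le> max 1 (lam - \<eta>) * e a b"
    proof (cases "a = b")
      case True
      then show ?thesis using F ab Metric_space.mdist_zero[OF MU] Metric_space.mdist_zero[OF e]
        by (simp add: bi_lipschitz_def)
    next
      case False
      then have "0 < e a b" using Metric_space.mdist_pos_less[OF e] ab by blast
      moreover have "dU (F a) (F b) / e a b < lam - \<eta>" using \<eta>(2)[of "(a, b)"] ab False by auto
      ultimately have "dU (F a) (F b) < (lam - \<eta>) * e a b" by (simp add: pos_divide_less_eq)
      also have "\<dots> \<le> max 1 (lam - \<eta>) * e a b" using \<open>0 < e a b\<close> by (intro mult_right_mono) auto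
      finally show ?thesis by simp
    qed
  qed simp
qed

lemma strict_mdist_bounds_nearby:
  assumes MU: "Metric_space U dU" and "finite F" "q \<in> U" and p: "p ` F \<subseteq> U"
    and bounds: "\<And>k. k \<in> F \<Longrightarrow> a k < dU q (p k) \<and> dU q (p k) < b k"
  obtains \<eta> where "0 < \<eta>"
    "\<And>y k. y \<in> U \<Longrightarrow> dU q y < \<eta> \<Longrightarrow> k \<in> F \<Longrightarrow> a k < dU y (p k) \<and> dU y (p k) < b k"
proof -
  interpret Metric_space U dU by fact
  obtain \<eta>1 where \<eta>1: "0 < \<eta>1" "\<forall>k\<in>F. a k + \<eta>1 < dU q (p k)"
    using finite_uniform_gap[of F a "\<lambda>k. dU q (p k)"] assms(2) bounds by auto
  obtain \<eta>2 where \<eta>2: "0 < \<eta>2" "\<forall>k\<in>F. dU q (p k) + \<eta>2 < b k"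
    using finite_uniform_gap[of F "\<lambda>k. dU q (p k)" b] assms(2) bounds by auto
  show ?thesis
  proof (rule that[of "min \<eta>1 \<eta>2"])
    fix y k assume y: "y \<in> U" "dU q y < min \<eta>1 \<eta>2" and k: "k \<in> F"
    have "p k \<in> U" using p k by blast
    then have "dU y (p k) \<le> dU q y + dU q (p k)" "dU q (p k) \<le> dU q y + dU y (p k)"
      using triangle[OF y(1) \<open>q \<in> U\<close>] triangle[OF \<open>q \<in> U\<close> y(1)] commute[of y q] by auto
    then show "a k < dU y (p k) \<and> dU y (p k) < b k" using \<eta>1(2) \<eta>2(2) y(2) k by auto
  qed (use \<eta>1(1) \<eta>2(1) in simp)
qed

lemma extension_property_bi_lipschitz_point:
  assumes MU: "Metric_space U dU" and ext: "extension_property U dU"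
    and A: "finite A" "p \<notin> A" and e: "Metric_space (insert p A) e"
    and F: "bi_lipschitz lam A e F U dU" and lam: "1 < lam"
  obtains q where "q \<in> U" "\<And>a. a \<in> A \<Longrightarrow> dU q (F a) < lam * e p a \<and> e p a < lam * dU q (F a)"
proof (cases "A = {}")
  case True
  obtain q where "q \<in> U"
    using extension_property_realizes_katetov[OF MU ext, of "{}"] by (auto simp: katetov_def)
  then show ?thesis using that True by blast
next
  case False
  interpret E: Metric_space "insert p A" e by fact
  interpret U: Metric_space U dU by fact
  have FU: "F ` A \<subseteq> U" using F by (auto simp: bi_lipschitz_def)
  have epos: "0 < e p a" if "a \<in> A" for a using that A(2) by (intro E.mdist_pos_less) auto
  obtain l where l: "1 \<le> l" "l < lam" "\<And>a b. a \<in> A \<Longrightarrow> b \<in> A \<Longrightarrow> dU (F a) (F b) \<le> l * e a b"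
    using bi_lipschitz_finite_slack[OF A(1) E.subspace[of A] MU F lam] by blast
  define r where "r w = Min ((\<lambda>a. l * e p a + dU (F a) w) ` A)" for w
  have "katetov (F ` A) dU r"
    unfolding r_def
  proof (rule katetov_Min[OF MU A(1) False FU FU])
    fix a b assume ab: "a \<in> A" "b \<in> A"
    have "e a b \<le> e a p + e p b" using ab by (intro E.triangle) auto
    then have "l * e a b \<le> l * e p a + l * e p b" using l(1) E.commute[of a p] by (simp add: distrib_left[symmetric])
    then show "dU (F a) (F b) \<le> l * e p a + l * e p b" using l(3)[OF ab] by linarith
  qed
  then obtain q where q: "q \<in> U" "\<And>w. w \<in> F ` A \<Longrightarrow> dU q w = r w"
    using extension_property_realizes_katetov[OF MU ext _ FU] A(1) by blast
  show ?thesis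
  proof (rule that[OF q(1)])
    fix a assume a: "a \<in> A"
    have "r (F a) \<le> l * e p a + dU (F a) (F a)" unfolding r_def using A(1) a by (intro Min_le) auto
    then have "dU q (F a) \<le> l * e p a" using q(2) a FU by auto
    also have "\<dots> < lam * e p a" using l(2) epos[OF a] by simp
    finally have upper: "dU q (F a) < lam * e p a" .
    have "r (F a) \<in> (\<lambda>b. l * e p b + dU (F b) (F a)) ` A"
      unfolding r_def using A(1) False by (intro Min_in) auto
    then obtain b where b: "b \<in> A" "r (F a) = l * e p b + dU (F b) (F a)" by auto
    have "lam \<le> lam * l" using l(1) lam by (simp add: mult_le_cancel_left1)
    then have lam_l: "e p c < lam * (l * e p c)" if "c \<in> A" for c
      using lam epos[OF that] by (simp add: mult.assoc[symmetric] less_le_trans[OF _ mult_right_mono])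
    have "e p a < lam * r (F a)"
    proof (cases "b = a")
      case True
      then show ?thesis using b(2) a lam_l[OF a] FU by auto
    next
      case False
      have "e b a < lam * dU (F b) (F a)" using F a b(1) False by (auto simp: bi_lipschitz_def)
      moreover have "e p a \<le> e p b + e b a" using a b(1) by (intro E.triangle) auto
      ultimately show ?thesis using b(2) lam_l[OF b(1)] by (simp add: distrib_left)
    qed
    then show "dU q (F a) < lam * e p a \<and> e p a < lam * dU q (F a)" using upper q(2) a by auto
  qed
qed

lemma extension_property_imp_almost_extension_property:
  assumes MU: "Metric_space U dU" and ext: "extension_property U dU"
  shows "almost_extension_property U dU"
  unfolding almost_extension_property_def
proof (intro allI impI, elim conjE)
  fix n :: nat and e :: "nat \<Rightarrow> nat \<Rightarrow> real" and lam F
  assume e: "Metric_space {0..n} e" and lam: "1 < lam" and F: "bi_lipschitz lam {0..<n} e F U dU"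
  have n: "{0..n} = insert n {0..<n}" by auto
  obtain q where "q \<in> U" "\<And>i. i \<in> {0..<n} \<Longrightarrow> dU q (F i) < lam * e n i \<and> e n i < lam * dU q (F i)"
    by (rule extension_property_bi_lipschitz_point[OF MU ext _ _ _ F lam]) (use e n in auto)
  then have "bi_lipschitz lam (insert n {0..<n}) e (F(n := q)) U dU"
    using e n by (intro bi_lipschitz_insert[OF _ MU F]) auto
  then show "\<exists>g. bi_lipschitz lam {0..n} e g U dU \<and> (\<forall>i<n. g i = F i)" using n by auto
qed

lemma almost_extension_property_dense_image:
  assumes MX: "Metric_space X d" and MU: "Metric_space U dU" and aep: "almost_extension_property U dU"
    and h: "isometric_into X d h U dU" and dense: "Metric_space.mtopology U dU closure_of (h ` X) = U"
  shows "almost_extension_property X d"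
  unfolding almost_extension_property_def
proof (intro allI impI, elim conjE)
  interpret U: Metric_space U dU by fact
  fix n :: nat and e :: "nat \<Rightarrow> nat \<Rightarrow> real" and lam f
  assume e: "Metric_space {0..n} e" and lam: "1 < lam" and f: "bi_lipschitz lam {0..<n} e f X d"
  have n: "{0..n} = insert n {0..<n}" by auto
  have hd: "dU (h x) (h y) = d x y" if "x \<in> X" "y \<in> X" for x y using h that by (simp add: isometric_into_def)
  have "inj_on h X" using MX MU h by (rule isometric_into_inj_on)
  then have "bi_lipschitz lam {0..<n} e (\<lambda>i. h (f i)) U dU"
    using f h hd by (auto simp: bi_lipschitz_def isometric_into_def inj_on_def)
  then obtain G where G: "bi_lipschitz lam {0..n} e G U dU" "\<And>i. i < n \<Longrightarrow> G i = h (f i)"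
    using aep[unfolded almost_extension_property_def, rule_format, of n e lam "\<lambda>i. h (f i)"] e lam by blast
  let ?q = "G n"
  have q: "?q \<in> U" using G(1) by (simp add: bi_lipschitz_def)
  have near: "e n i / lam < dU ?q (h (f i)) \<and> dU ?q (h (f i)) < lam * e n i" if "i \<in> {..<n}" for i
  proof -
    have "n \<in> {0..n}" "i \<in> {0..n}" "n \<noteq> i" using that by auto
    then have "dU (G n) (G i) < lam * e n i \<and> e n i < lam * dU (G n) (G i)"
      using G(1) unfolding bi_lipschitz_def by blast
    then show ?thesis using G(2) that lam by (simp add: pos_divide_less_eq mult.commute)
  qed
  have hfU: "(\<lambda>i. h (f i)) ` {..<n} \<subseteq> U" using f h by (auto simp: bi_lipschitz_def isometric_into_def)
  obtain \<eta> where \<eta>: "0 < \<eta>" "\<And>y i. y \<in> U \<Longrightarrow> dU ?q y < \<eta> \<Longrightarrow> i \<in> {..<n} \<Longrightarrow>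
      e n i / lam < dU y (h (f i)) \<and> dU y (h (f i)) < lam * e n i"
    using strict_mdist_bounds_nearby[OF MU finite_lessThan q hfU near] by blast
  have "?q \<in> U.mtopology closure_of (h ` X)" using dense q by simp
  then obtain z where "z \<in> h ` X" "z \<in> U.mball ?q \<eta>" unfolding U.metric_closure_of using \<eta>(1) by blast
  then obtain x where x: "x \<in> X" "h x \<in> U" "dU ?q (h x) < \<eta>" by auto
  have "d x (f i) < lam * e n i \<and> e n i < lam * d x (f i)" if "i < n" for i
  proof -
    have "f i \<in> X" using f that by (simp add: bi_lipschitz_def)
    then have "e n i / lam < d x (f i) \<and> d x (f i) < lam * e n i"
      using \<eta>(2)[OF x(2,3), of i] hd[OF x(1) \<open>f i \<in> X\<close>] that by simp
    then show ?thesis using lam by (simp add: pos_divide_less_eq mult.commute)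
  qed
  then have "bi_lipschitz lam (insert n {0..<n}) e (f(n := x)) X d"
    using e MX f x(1) by (intro bi_lipschitz_insert) (auto simp: n)
  then show "\<exists>g. bi_lipschitz lam {0..n} e g X d \<and> (\<forall>i<n. g i = f i)" using n by auto
qed

lemma isometric_into_extend:
  assumes MX: "Metric_space X d" and MU: "Metric_space U dU" and ext: "extension_property U dU"
    and A: "finite A" "A \<subseteq> X" and h: "isometric_into A d h U dU" and x: "x \<in> X"
  obtains h' where "isometric_into (insert x A) d h' U dU" "\<And>a. a \<in> A \<Longrightarrow> h' a = h a"
proof (cases "x \<in> A")
  case True
  then show ?thesis using that[of h] h by (simp add: insert_absorb)
next
  case False
  have inj: "inj_on h A" using Metric_space.subspace[OF MX A(2)] MU h by (rule isometric_into_inj_on)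
  have hA: "h ` A \<subseteq> U" using h by (auto simp: isometric_into_def)
  have "katetov (h ` A) dU (\<lambda>w. d x (inv_into A h w))"
    using katetov_mdist[OF MX A(2) x] h inj by (rule katetov_image)
  then obtain q where q: "q \<in> U" "\<And>w. w \<in> h ` A \<Longrightarrow> dU q w = d x (inv_into A h w)"
    using extension_property_realizes_katetov[OF MU ext _ hA] A(1) by blast
  have "isometric_into (insert x A) d (h(x := q)) U dU"
    using MX MU h A(2) x q(1) by (rule isometric_into_insert) (use q(2) inj in auto)
  then show ?thesis by (rule that) (use False in auto)
qed

lemma almost_extension_property_approx:
  assumes aep: "almost_extension_property X d" and MX: "Metric_space X d" and MU: "Metric_space U dU"
    and A: "finite A" "A \<subseteq> X" and h: "isometric_into A d h U dU"
    and u: "u \<in> U" "u \<notin> h ` A" and "0 < \<epsilon>"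
  obtains y where "y \<in> X" "y \<notin> A" "\<And>a. a \<in> A \<Longrightarrow> \<bar>d y a - dU u (h a)\<bar> < \<epsilon>"
proof -
  let ?\<rho> = "\<lambda>a. dU u (h a)"
  have "\<forall>\<^sub>F lam in at_right 1. \<forall>a\<in>A. (lam - 1) * lam * ?\<rho> a < \<epsilon>"
  proof (rule eventually_ball_finite[OF A(1)], intro ballI)
    fix a
    have lim: "((\<lambda>lam. (lam - 1) * lam * ?\<rho> a) \<longlongrightarrow> (1 - 1) * 1 * ?\<rho> a) (at_right 1)"
      by (intro tendsto_intros)
    show "\<forall>\<^sub>F lam in at_right 1. (lam - 1) * lam * ?\<rho> a < \<epsilon>"
      using order_tendstoD(2)[OF lim] \<open>0 < \<epsilon>\<close> by simp
  qed
  moreover have "\<forall>\<^sub>F lam in at_right (1::real). 1 < lam" by (rule eventually_at_right_less)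
  ultimately have "\<forall>\<^sub>F lam in at_right 1. (\<forall>a\<in>A. (lam - 1) * lam * ?\<rho> a < \<epsilon>) \<and> 1 < lam"
    by (rule eventually_conj)
  then obtain lam where lam: "1 < lam" "\<And>a. a \<in> A \<Longrightarrow> (lam - 1) * lam * ?\<rho> a < \<epsilon>"
    using eventually_happens'[OF trivial_limit_at_right_real] by blast
  have MA: "Metric_space A d" using MX A(2) by (rule Metric_space.subspace)
  have inj: "inj_on h A" using MA MU h by (rule isometric_into_inj_on)
  have hA: "h ` A \<subseteq> U" using h by (auto simp: isometric_into_def)
  have MhA: "Metric_space (insert u (h ` A)) dU" using MU by (rule Metric_space.subspace) (use hA u(1) in auto)
  have "isometric_into (h ` A) dU (inv_into A h) X d"
    using h inj A(2) by (auto simp: isometric_into_def Metric_space.commute[OF MX])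
  with Metric_space.subspace[OF MU hA] MX have bl: "bi_lipschitz lam (h ` A) dU (inv_into A h) X d"
    using lam(1) by (rule isometric_into_imp_bi_lipschitz)
  obtain g where g: "bi_lipschitz lam (insert u (h ` A)) dU g X d"
    "\<And>w. w \<in> h ` A \<Longrightarrow> g w = inv_into A h w"
    by (rule almost_extension_property_finite[OF aep _ u(2) lam(1) MhA bl]) (use A(1) in auto)
  show ?thesis
  proof (rule that)
    show "g u \<in> X" using g(1) by (simp add: bi_lipschitz_def)
    have gha: "g (h a) = a" if "a \<in> A" for a using g(2) inj that by simp
    have near: "d (g u) a < lam * ?\<rho> a \<and> ?\<rho> a < lam * d (g u) a" if "a \<in> A" for a
    proof -
      have "u \<noteq> h a" using u(2) that by auto
      then show ?thesis using g(1) gha[OF that] that unfolding bi_lipschitz_def by force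
    qed
    show "g u \<notin> A"
    proof
      assume "g u \<in> A"
      then have "g u = g (h (g u))" using gha by simp
      then have "u = h (g u)" using g(1) \<open>g u \<in> A\<close> unfolding bi_lipschitz_def inj_on_def by blast
      then show False using u(2) \<open>g u \<in> A\<close> by blast
    qed
    fix a assume a: "a \<in> A"
    have \<rho>: "0 \<le> ?\<rho> a" using MU by (simp add: Metric_space.nonneg)
    have "d (g u) a - ?\<rho> a < (lam - 1) * ?\<rho> a" using near[OF a] by (simp add: algebra_simps)
    also have "\<dots> \<le> (lam - 1) * lam * ?\<rho> a" using lam(1) \<rho> by (simp add: mult_right_mono)
    finally have upper: "d (g u) a - ?\<rho> a < (lam - 1) * lam * ?\<rho> a" .
    have "?\<rho> a - d (g u) a < (lam - 1) * d (g u) a" using near[OF a] by (simp add: algebra_simps)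
    also have "\<dots> \<le> (lam - 1) * (lam * ?\<rho> a)" using lam(1) near[OF a] by (intro mult_left_mono) auto
    finally have lower: "?\<rho> a - d (g u) a < (lam - 1) * lam * ?\<rho> a" by (simp add: mult.assoc)
    show "\<bar>d (g u) a - ?\<rho> a\<bar> < \<epsilon>" using upper lower lam(2)[OF a] by linarith
  qed
qed

lemma isometric_into_extend_near:
  assumes aep: "almost_extension_property X d" and MX: "Metric_space X d"
    and MU: "Metric_space U dU" and ext: "extension_property U dU"
    and A: "finite A" "A \<subseteq> X" and h: "isometric_into A d h U dU" and u: "u \<in> U" and "0 < \<epsilon>"
  obtains y h' where "y \<in> X" "isometric_into (insert y A) d h' U dU" "\<And>a. a \<in> A \<Longrightarrow> h' a = h a"
    "dU (h' y) u < \<epsilon>"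
proof (cases "u \<in> h ` A")
  case True
  then obtain a where a: "a \<in> A" "u = h a" by blast
  show ?thesis
  proof (rule that)
    show "a \<in> X" using a(1) A(2) by blast
    show "isometric_into (insert a A) d h U dU" using h a(1) by (simp add: insert_absorb)
    have "h a \<in> U" using h a(1) by (simp add: isometric_into_def)
    then show "dU (h a) u < \<epsilon>" using Metric_space.mdist_zero[OF MU] a(2) \<open>0 < \<epsilon>\<close> by simp
  qed simp
next
  case False
  obtain y where y: "y \<in> X" "y \<notin> A" and close: "\<And>a. a \<in> A \<Longrightarrow> \<bar>d y a - dU u (h a)\<bar> < \<epsilon>"
    using almost_extension_property_approx[OF aep MX MU A h u False \<open>0 < \<epsilon>\<close>] by blast
  have inj: "inj_on h A" using Metric_space.subspace[OF MX A(2)] MU h by (rule isometric_into_inj_on)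
  have hA: "h ` A \<subseteq> U" using h by (auto simp: isometric_into_def)
  let ?r = "\<lambda>w. d y (inv_into A h w)"
  have r: "katetov (h ` A) dU ?r"
    using katetov_mdist[OF MX A(2) y(1)] h inj by (rule katetov_image)
  have \<rho>: "katetov (h ` A) dU (dU u)" using MU hA u by (rule katetov_mdist)
  define \<delta> where "\<delta> = Max (insert 0 ((\<lambda>w. \<bar>?r w - dU u w\<bar>) ` h ` A))"
  have fin: "finite (insert 0 ((\<lambda>w. \<bar>?r w - dU u w\<bar>) ` h ` A))" using A(1) by simp
  have "0 \<le> \<delta>" unfolding \<delta>_def using fin by (intro Max_ge) auto
  moreover have "\<bar>?r w - dU u w\<bar> \<le> \<delta> \<and> \<delta> \<le> ?r w + dU u w" if "w \<in> h ` A" for w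
  proof
    show "\<bar>?r w - dU u w\<bar> \<le> \<delta>" unfolding \<delta>_def using fin that by (intro Max_ge) auto
    show "\<delta> \<le> ?r w + dU u w" unfolding \<delta>_def using fin that
      katetov_nonneg[OF Metric_space.subspace[OF MU hA] r that] Metric_space.nonneg[OF MU]
      katetov_diff_le_add[OF r \<rho> that] by (subst Max_le_iff) auto
  qed
  ultimately have r': "katetov (insert u (h ` A)) dU (?r(u := \<delta>))"
    using katetov_insert[OF MU hA u r] by blast
  have "finite (insert u (h ` A))" "insert u (h ` A) \<subseteq> U" using A(1) hA u by auto
  then obtain q where q: "q \<in> U" "\<And>w. w \<in> insert u (h ` A) \<Longrightarrow> dU q w = (?r(u := \<delta>)) w"
    using extension_property_realizes_katetov[OF MU ext _ _ r'] by blast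
  have qh: "dU q (h a) = d y a" if "a \<in> A" for a
    using q(2)[of "h a"] that inj False by auto
  show ?thesis
  proof (rule that)
    show "y \<in> X" by fact
    show "isometric_into (insert y A) d (h(y := q)) U dU"
      using MX MU h A(2) y(1) q(1) qh by (rule isometric_into_insert)
    show "(h(y := q)) a = h a" if "a \<in> A" for a using that y(2) by auto
    have "\<delta> < \<epsilon>" unfolding \<delta>_def using fin close \<open>0 < \<epsilon>\<close> inj by (subst Max_less_iff) auto
    then show "dU ((h(y := q)) y) u < \<epsilon>" using q(2)[of u] by simp
  qed
qed

lemma isometric_into_chain_Union:
  assumes iso: "\<And>n. isometric_into (A n) d (h n) U dU"
    and mono: "\<And>n. A n \<subseteq> A (Suc n)" and agree: "\<And>n a. a \<in> A n \<Longrightarrow> h (Suc n) a = h n a"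
  obtains H where "isometric_into (\<Union>n. A n) d H U dU" "\<And>n a. a \<in> A n \<Longrightarrow> H a = h n a"
proof -
  have sub: "A m \<subseteq> A n" if "m \<le> n" for m n
    using mono that by (rule lift_Suc_mono_le)
  have eq: "h n a = h m a" if "m \<le> n" "a \<in> A m" for m n a
    using that(1)
  proof (induction n rule: dec_induct)
    case (step k)
    then show ?case using agree[of a k] sub[of m k] that(2) by auto
  qed simp
  define H where "H a = h (LEAST n. a \<in> A n) a" for a
  have H: "H a = h n a" if "a \<in> A n" for n a
  proof -
    let ?m = "LEAST n. a \<in> A n"
    have "?m \<le> n" "a \<in> A ?m" using that by (auto intro: Least_le LeastI)
    then show ?thesis using eq unfolding H_def by simp
  qed
  have "isometric_into (\<Union>n. A n) d H U dU"
    unfolding isometric_into_def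
  proof (intro conjI ballI)
    fix a assume "a \<in> (\<Union>n. A n)"
    then obtain n where "a \<in> A n" by blast
    then show "H a \<in> U" using iso[of n] H by (simp add: isometric_into_def)
  next
    fix a b assume "a \<in> (\<Union>n. A n)" "b \<in> (\<Union>n. A n)"
    then obtain m n where "a \<in> A m" "b \<in> A n" by blast
    then have "a \<in> A (max m n)" "b \<in> A (max m n)" using sub by (meson max.cobounded1 max.cobounded2 subsetD)+
    then show "dU (H a) (H b) = d a b" using iso[of "max m n"] H by (simp add: isometric_into_def)
  qed
  then show ?thesis using H by (rule that)
qed

lemma partial_isometry_chain:
  assumes aep: "almost_extension_property X d" and MX: "Metric_space X d"
    and MU: "Metric_space U dU" and ext: "extension_property U dU"
    and x: "\<And>n. x n \<in> X" and t: "\<And>n. t n \<in> U" and \<epsilon>: "\<And>n. 0 < \<epsilon> n"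
  obtains A h where "\<And>n. A n \<subseteq> X" "\<And>n. isometric_into (A n) d (h n) U dU"
    "\<And>n. A n \<subseteq> A (Suc n)" "\<And>n a. a \<in> A n \<Longrightarrow> h (Suc n) a = h n a"
    "\<And>n. x n \<in> A (Suc n)" "\<And>n. \<exists>y\<in>A (Suc n). dU (h (Suc n) y) (t n) < \<epsilon> n"
proof -
  define P where "P n Ah \<longleftrightarrow> finite (fst Ah) \<and> fst Ah \<subseteq> X \<and> isometric_into (fst Ah) d (snd Ah) U dU"
    for n :: nat and Ah :: "'a set \<times> ('a \<Rightarrow> 'b)"
  define Q where "Q n Ah Ah' \<longleftrightarrow> fst Ah \<subseteq> fst Ah' \<and> (\<forall>a\<in>fst Ah. snd Ah' a = snd Ah a)
      \<and> x n \<in> fst Ah' \<and> (\<exists>y\<in>fst Ah'. dU (snd Ah' y) (t n) < \<epsilon> n)"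
    for n :: nat and Ah Ah' :: "'a set \<times> ('a \<Rightarrow> 'b)"
  have "\<exists>S. \<forall>n. P n (S n) \<and> Q n (S n) (S (Suc n))"
  proof (rule dependent_nat_choice)
    show "\<exists>Ah. P 0 Ah" by (rule exI[of _ "({}, undefined)"]) (simp add: P_def isometric_into_def)
  next
    fix Ah n assume "P n Ah"
    then obtain A h where Ah: "Ah = (A, h)" "finite A" "A \<subseteq> X" "isometric_into A d h U dU"
      by (cases Ah) (auto simp: P_def)
    obtain h1 where h1: "isometric_into (insert (x n) A) d h1 U dU" "\<And>a. a \<in> A \<Longrightarrow> h1 a = h a"
      by (rule isometric_into_extend[OF MX MU ext Ah(2-4) x]) auto
    obtain y h2 where y: "y \<in> X" "isometric_into (insert y (insert (x n) A)) d h2 U dU"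
        "\<And>a. a \<in> insert (x n) A \<Longrightarrow> h2 a = h1 a" "dU (h2 y) (t n) < \<epsilon> n"
      by (rule isometric_into_extend_near[OF aep MX MU ext _ _ h1(1) t \<epsilon>]) (use Ah(2,3) x in auto)
    show "\<exists>Ah'. P (Suc n) Ah' \<and> Q n Ah Ah'"
      using Ah y h1(2) x[of n] by (intro exI[of _ "(insert y (insert (x n) A), h2)"]) (auto simp: P_def Q_def)
  qed
  then obtain S where S: "\<And>n. P n (S n)" "\<And>n. Q n (S n) (S (Suc n))" by blast
  show ?thesis
  proof (rule that[of "\<lambda>n. fst (S n)" "\<lambda>n. snd (S n)"])
    show "fst (S n) \<subseteq> X" "isometric_into (fst (S n)) d (snd (S n)) U dU" for n
      using S(1)[of n] by (auto simp: P_def)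
    show "fst (S n) \<subseteq> fst (S (Suc n))" "x n \<in> fst (S (Suc n))"
      "\<exists>y\<in>fst (S (Suc n)). dU (snd (S (Suc n)) y) (t n) < \<epsilon> n" for n
      using S(2)[of n] by (auto simp: Q_def)
    show "snd (S (Suc n)) a = snd (S n) a" if "a \<in> fst (S n)" for n a
      using S(2)[of n] that by (auto simp: Q_def)
  qed
qed

lemma mtopology_closure_of_eq_if_approximates_dense:
  assumes MU: "Metric_space U dU" and D: "Metric_space.mtopology U dU closure_of D = U" "D \<subseteq> U"
    and "S \<subseteq> U" and approx: "\<And>v r. v \<in> D \<Longrightarrow> 0 < r \<Longrightarrow> \<exists>s\<in>S. dU v s < r"
  shows "Metric_space.mtopology U dU closure_of S = U"
proof -
  interpret Metric_space U dU by fact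
  have "D \<subseteq> mtopology closure_of S"
    using approx D(2) \<open>S \<subseteq> U\<close> by (fastforce simp: metric_closure_of)
  then have "U \<subseteq> mtopology closure_of S"
    using closure_of_mono[of D] D(1) by (metis closure_of_closure_of)
  then show ?thesis using closure_of_subset_topspace[of mtopology] by auto
qed

lemma almost_extension_property_imp_dense_embedding:
  assumes aep: "almost_extension_property X d" and MX: "Metric_space X d"
    and "countable X" "X \<noteq> {}"
    and MU: "Metric_space U dU" and ext: "extension_property U dU"
    and sep: "separable_space (Metric_space.mtopology U dU)"
  obtains H where "isometric_into X d H U dU" "Metric_space.mtopology U dU closure_of (H ` X) = U"
proof -
  interpret U: Metric_space U dU by fact
  obtain D where D: "countable D" "D \<subseteq> U" "U.mtopology closure_of D = U"
    using sep unfolding separable_space_def by auto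
  obtain q where "q \<in> U"
    using extension_property_realizes_katetov[OF MU ext, of "{}"] by (auto simp: katetov_def)
  then have "D \<noteq> {}" using D(3) by auto
  define t where "t n = from_nat_into D (fst (prod_decode n))" for n
  define \<epsilon> where "\<epsilon> n = inverse (real (Suc (snd (prod_decode n))))" for n
  have x: "from_nat_into X n \<in> X" for n using \<open>X \<noteq> {}\<close> by (rule from_nat_into)
  have t: "t n \<in> U" for n using from_nat_into[OF \<open>D \<noteq> {}\<close>] D(2) by (auto simp: t_def)
  have \<epsilon>: "0 < \<epsilon> n" for n by (simp add: \<epsilon>_def)
  obtain A h where A: "\<And>n. A n \<subseteq> X" "\<And>n. isometric_into (A n) d (h n) U dU"
    "\<And>n. A n \<subseteq> A (Suc n)" "\<And>n a. a \<in> A n \<Longrightarrow> h (Suc n) a = h n a"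
    "\<And>n. from_nat_into X n \<in> A (Suc n)" "\<And>n. \<exists>y\<in>A (Suc n). dU (h (Suc n) y) (t n) < \<epsilon> n"
    by (rule partial_isometry_chain[where x = "from_nat_into X" and t = t and \<epsilon> = \<epsilon>,
          OF aep MX MU ext x t \<epsilon>]) blast
  obtain H where H: "isometric_into (\<Union>n. A n) d H U dU" "\<And>n a. a \<in> A n \<Longrightarrow> H a = h n a"
    by (rule isometric_into_chain_Union[where A = A and h = h, OF A(2-4)]) auto
  have X: "(\<Union>n. A n) = X"
  proof
    show "X \<subseteq> (\<Union>n. A n)"
      using A(5) from_nat_into_surj[OF \<open>countable X\<close>] by (metis UN_I UNIV_I subsetI)
  qed (use A(1) in auto)
  have "\<exists>z\<in>H ` X. dU v z < r" if v: "v \<in> D" and "0 < r" for v r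
  proof -
    obtain k where k: "from_nat_into D k = v" using from_nat_into_surj[OF D(1) v] by blast
    obtain j where j: "inverse (real (Suc j)) < r" using reals_Archimedean[OF \<open>0 < r\<close>] by blast
    obtain y where y: "y \<in> A (Suc (prod_encode (k, j)))"
      "dU (h (Suc (prod_encode (k, j))) y) v < inverse (real (Suc j))"
      using A(6)[of "prod_encode (k, j)"] by (auto simp: t_def \<epsilon>_def k)
    have "y \<in> X" using y(1) X by blast
    moreover have "dU v (H y) < r" using y H(2)[OF y(1)] j U.commute[of v] by simp
    ultimately show ?thesis by blast
  qed
  moreover have "H ` X \<subseteq> U" using H(1) unfolding X by (auto simp: isometric_into_def)
  ultimately have "U.mtopology closure_of (H ` X) = U"
    using mtopology_closure_of_eq_if_approximates_dense[OF MU D(3,2)] by blast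
  with H(1) show ?thesis unfolding X by (rule that)
qed

theorem fact3p7:
  fixes X :: "'a set" and d :: "'a \<Rightarrow> 'a \<Rightarrow> real"
    and U :: "'u set" and dU :: "'u \<Rightarrow> 'u \<Rightarrow> real"
  assumes "Metric_space X d" and "countable X" and "infinite X"
    and "urysohn_space U dU"
  shows "(\<exists>h. isometric_into X d h U dU \<and>
              (Metric_space.mtopology U dU) closure_of (h ` X) = U)
         \<longleftrightarrow> almost_extension_property X d"
proof -
  have MU: "Metric_space U dU" and ext: "extension_property U dU"
    and sep: "separable_space (Metric_space.mtopology U dU)"
    using assms(4) by (simp_all add: urysohn_space_def)
  have "X \<noteq> {}" using \<open>infinite X\<close> by auto
  show ?thesis
  proof
    assume "\<exists>h. isometric_into X d h U dU \<and> Metric_space.mtopology U dU closure_of (h ` X) = U"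
    then show "almost_extension_property X d"
      using almost_extension_property_dense_image[OF assms(1) MU
          extension_property_imp_almost_extension_property[OF MU ext]] by blast
  next
    assume "almost_extension_property X d"
    then show "\<exists>h. isometric_into X d h U dU \<and> Metric_space.mtopology U dU closure_of (h ` X) = U"
      using almost_extension_property_imp_dense_embedding[OF _ assms(1,2) \<open>X \<noteq> {}\<close> MU ext sep]
      by blast
  qed
qed

end
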